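(* Let $\mu>0$, $\alpha>0$, $f(x)=xe^{-x}$, and let $\beta\in L^\infty_+(0,+\infty)$ satisfy $\int_0^{\infty}\beta(a)e^{-\mu a}\,da=1$. Assume $t\mapsto u(t,\cdot)\in L^1_+(0,\infty)$, $t\in\mathbb R$, is a complete orbit of the semiflow generated by $\partial_tu+\partial_au=-\mu u$, $u(t,0)=\alpha f(\int_0^\infty\beta(a)u(t,a)\,da)$. Then there is a function $b$ such that $u(t,a)=e^{-\mu a}b(t-a)$ for almost every $a\ge0$ and all $t\in\mathbb R$, and $b$ satisfies the renewal equation $$b(t)=\alpha f\Big(\int_0^\infty\beta(a)e^{-\mu a}b(t-a)\,da\Big),\quad\forall t\in\mathbb R.$$ Moreover, if in addition $\gamma_-\le\int_0^{a^\star}u(t,a)\,da\le\gamma_+$ for all $t\in\mathbb R$, for some $\gamma_+>\gamma_->0$, where $a^\star=\sup\{a>0:\int_a^\infty\beta(\sigma)e^{-\mu\sigma}\,d\sigma>0\}$, then there exist $\delta^+\ge\delta^->0$ such that $\delta^-\le\int_0^\infty\beta(a)u(t,a)\,da\le\delta^+$ for all $t\in\mathbb R$.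
   Context: A complete orbit is a map $t\mapsto u(t,\cdot)$ defined for all $t\in\mathbb R$ with $U(s)u(t,\cdot)=u(t+s,\cdot)$ for all $t\in\mathbb R$, $s\ge0$, where $U$ is the semiflow: $U(s)u_0(a)=e^{-\mu s}u_0(a-s)$ for $a\ge s$ and $e^{-\mu a}b(s-a)$ for $a\le s$, with $b$ the continuous solution of $b(s)=\alpha f\big(\int_s^\infty\beta(a)e^{-\mu s}u_0(a-s)\,da+\int_0^s\beta(a)e^{-\mu a}b(s-a)\,da\big)$. *)

theory Defs
  imports "HOL-Analysis.Analysis"
begin

definition ricker :: "real \<Rightarrow> real" where
  "ricker x = x * exp (- x)"

text \<open>Elements of L^1_+(0,\<infinity>), represented by functions (equality only a.e. matters).\<close>
definition L1_plus :: "(real \<Rightarrow> real) \<Rightarrow> bool" where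
  "L1_plus v \<longleftrightarrow> set_integrable lborel {0..} v \<and> (AE a in lborel. 0 \<le> a \<longrightarrow> 0 \<le> v a)"

text \<open>\<open>semiflow_step \<mu> \<alpha> \<beta> u0 s v\<close>: v = U(s) u0 (a.e. on [0,\<infinity>)), where b is the
  continuous solution on [0,s] of the boundary fixed-point equation.\<close>
definition semiflow_step ::
  "real \<Rightarrow> real \<Rightarrow> (real \<Rightarrow> real) \<Rightarrow> (real \<Rightarrow> real) \<Rightarrow> real \<Rightarrow> (real \<Rightarrow> real) \<Rightarrow> bool" where
  "semiflow_step \<mu> \<alpha> \<beta> u0 s v \<longleftrightarrow>
     (\<exists>b :: real \<Rightarrow> real. continuous_on {0..s} b \<and>
        (\<forall>\<tau>\<in>{0..s}. b \<tau> = \<alpha> * ricker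
            ((LINT a:{\<tau>..}|lborel. \<beta> a * exp (- \<mu> * \<tau>) * u0 (a - \<tau>))
             + (LINT a:{0..\<tau>}|lborel. \<beta> a * exp (- \<mu> * a) * b (\<tau> - a)))) \<and>
        (AE a in lborel. 0 \<le> a \<longrightarrow>
            v a = (if s \<le> a then exp (- \<mu> * s) * u0 (a - s) else exp (- \<mu> * a) * b (s - a))))"

definition complete_orbit ::
  "real \<Rightarrow> real \<Rightarrow> (real \<Rightarrow> real) \<Rightarrow> (real \<Rightarrow> real \<Rightarrow> real) \<Rightarrow> bool" where
  "complete_orbit \<mu> \<alpha> \<beta> u \<longleftrightarrow>
     (\<forall>t. L1_plus (u t)) \<and> (\<forall>t s. 0 \<le> s \<longrightarrow> semiflow_step \<mu> \<alpha> \<beta> (u t) s (u (t + s)))"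

definition a_star :: "real \<Rightarrow> (real \<Rightarrow> real) \<Rightarrow> ereal" where
  "a_star \<mu> \<beta> = Sup (ereal ` {a. 0 < a \<and> (LINT \<sigma>:{a..}|lborel. \<beta> \<sigma> * exp (- \<mu> * \<sigma>)) > 0})"

end

theory Submission
  imports Defs
begin

(*
  Write b(t) = alpha f(int beta u(t, .)). The boundary values of a semiflow step of length s
  started at time t coincide with b(t + .) on [0, s]: at the right end point this is the boundary
  equation together with the transport representation of u(t + s), and two steps started at the
  same time agree on their common interval, being continuous and equal almost everywhere. Hence b
  is continuous, u(t, a) = exp(-mu a) b(t - a), and b solves the renewal equation.

  The upper bound follows from f <= 1/e. For the lower bound, f(x) >= x exp(-alpha/e) on the range
  of the beta-moment, so b >= kappa (beta exp(-mu .)) * b with kappa = alpha exp(-alpha/e), where *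
  is convolution over the ages. The kernel exceeds some c > 0 on a set filling three quarters of
  an interval, so by a Steinhaus argument b dominates a multiple of its convolution with the
  indicator of an interval, and composing such inequalities stretches the interval:
  b(t) >= C int_0^L b(t - w - a) da for every L. The mass bound int_0^oo u(t, a) da >= gamma_-
  (the only consequence of the hypothesis on [0, a_star] that is needed) makes the integral at
  least gamma_-/2 once L is large.
*)

section \<open>Measure-theoretic preliminaries\<close>

lemma AE_lborel_affine:
  fixes c t :: real
  assumes c: "c \<noteq> 0" and P: "AE x in lborel. P x"
  shows "AE x in lborel. P (t + c * x)"
proof -
  from P obtain N where N: "{x \<in> space lborel. \<not> P x} \<subseteq> N" "emeasure lborel N = 0" "N \<in> sets lborel"
    by (auto elim!: AE_E)
  have "AE x in lborel. x \<notin> N"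
    using N by (intro AE_not_in) auto
  then have "AE x in lborel. t + c * x \<notin> N"
    using AE_borel_affine[OF c, where t=t and P="\<lambda>x. x \<notin> N"] N by auto
  then show ?thesis
    by eventually_elim (use N in auto)
qed

lemma continuous_on_eq_if_AE_eq:
  fixes f g :: "real \<Rightarrow> real"
  assumes "p < q" and f: "continuous_on {p..q} f" and g: "continuous_on {p..q} g"
    and ae: "AE y in lborel. p < y \<and> y < q \<longrightarrow> f y = g y"
  shows "\<forall>y\<in>{p..q}. f y = g y"
proof -
  define D where "D = (\<lambda>y. f y - g y) -` (- {0}) \<inter> {p<..<q}"
  have "continuous_on {p<..<q} (\<lambda>y. f y - g y)"
    by (rule continuous_on_subset[of "{p..q}"]) (auto intro!: continuous_intros f g)
  then have "open D"
    unfolding D_def using continuous_on_open_vimage[of "{p<..<q}"] open_Compl[of "{0::real}"] by auto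
  from ae obtain N where N: "{y \<in> space lborel. \<not> (p < y \<and> y < q \<longrightarrow> f y = g y)} \<subseteq> N"
      "emeasure lborel N = 0" "N \<in> sets lborel"
    by (auto elim!: AE_E)
  have "D = {}"
  proof (rule ccontr)
    assume "D \<noteq> {}"
    then obtain y where "y \<in> D"
      by auto
    with \<open>open D\<close> obtain r where "0 < r" "ball y r \<subseteq> D"
      by (auto simp: open_contains_ball)
    moreover have "{y - r/2..y + r/2} \<subseteq> ball y r"
      using \<open>0 < r\<close> by (auto simp: dist_real_def)
    moreover have "D \<subseteq> N"
      using N(1) by (auto simp: D_def)
    ultimately have "{y - r/2..y + r/2} \<subseteq> N"
      by blast
    then have "emeasure lborel {y - r/2..y + r/2} \<le> emeasure lborel N"
      using N(3) by (rule emeasure_mono)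
    then show False
      using \<open>0 < r\<close> N(2) by simp
  qed
  then have "\<And>y. y \<in> {p<..<q} \<Longrightarrow> f y - g y = 0"
    by (auto simp: D_def)
  moreover have "continuous_on (closure {p<..<q}) (\<lambda>y. f y - g y)"
    using \<open>p < q\<close> by (auto intro!: continuous_intros f g)
  ultimately have "f y - g y = 0" if "y \<in> {p..q}" for y
    using continuous_constant_on_closure[of "{p<..<q}" "\<lambda>y. f y - g y" 0 y] that \<open>p < q\<close> by auto
  then show ?thesis
    by simp
qed

lemma set_integral_singleton_real: "(LINT a:{c::real}|lborel. f a) = (0::real)"
proof -
  have "(\<lambda>x. indicator {c} x *\<^sub>R f x) = (\<lambda>x. f c * indicator {c} x :: real)"
    by (auto simp: indicator_def fun_eq_iff)
  then show ?thesis
    by (simp add: set_lebesgue_integral_def)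
qed

lemma
  fixes m L :: real
  assumes m: "0 < m"
  shows set_integrable_exp_minus_tail: "set_integrable lborel {L..} (\<lambda>a. exp (- m * a))"
    and set_integral_exp_minus_tail: "(LINT a:{L..}|lborel. exp (- m * a)) = exp (- m * L) / m"
proof -
  have hk: "((\<lambda>x. exp (- m * x)) has_integral exp (- m * L) / m) {L..}"
    using has_integral_exp_minus_to_infinity[OF m, of L] by simp
  have "(\<lambda>x. exp (- m * x)) absolutely_integrable_on {L..}"
    by (rule nonnegative_absolutely_integrable_1) (use hk in \<open>auto simp: integrable_on_def\<close>)
  then show si: "set_integrable lborel {L..} (\<lambda>a. exp (- m * a))"
    unfolding set_integrable_def by (subst integrable_completion[symmetric]) auto
  show "(LINT a:{L..}|lborel. exp (- m * a)) = exp (- m * L) / m"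
    using set_borel_integral_eq_integral(2)[OF si] hk by (simp add: integral_unique)
qed

lemma nn_integral_indicator_eq_set_integral:
  fixes f :: "real \<Rightarrow> real"
  assumes "set_integrable lborel A f" "\<And>x. x \<in> A \<Longrightarrow> 0 \<le> f x"
  shows "(\<integral>\<^sup>+a. indicator A a * ennreal (f a) \<partial>lborel) = ennreal (LINT a:A|lborel. f a)"
proof -
  have "(\<integral>\<^sup>+a. indicator A a * ennreal (f a) \<partial>lborel) = (\<integral>\<^sup>+a. ennreal (indicator A a *\<^sub>R f a) \<partial>lborel)"
    by (rule nn_integral_cong) (simp add: indicator_mult_ennreal)
  also have "\<dots> = ennreal (LINT a:A|lborel. f a)"
    unfolding set_lebesgue_integral_def
    by (rule nn_integral_eq_integral) (use assms in \<open>auto simp: set_integrable_def indicator_def\<close>)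
  finally show ?thesis .
qed

lemma set_integral_le_of_subset_nonneg:
  fixes f :: "real \<Rightarrow> real"
  assumes f: "set_integrable lborel A f" and nonneg: "AE a in lborel. a \<in> A \<longrightarrow> 0 \<le> f a"
    and "S \<subseteq> A"
  shows "(LINT a:S|lborel. f a) \<le> (LINT a:A|lborel. f a)"
proof (cases "set_integrable lborel S f")
  case True
  show ?thesis
    unfolding set_lebesgue_integral_def
    by (rule integral_mono_AE) (use True f nonneg \<open>S \<subseteq> A\<close> in
        \<open>auto simp: set_integrable_def indicator_def elim!: eventually_mono\<close>)
next
  case False
  then have "(LINT a:S|lborel. f a) = 0"
    unfolding set_integrable_def set_lebesgue_integral_def by (rule not_integrable_integral_eq)
  moreover have "0 \<le> (LINT a:A|lborel. f a)"
    unfolding set_lebesgue_integral_def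
    by (rule integral_nonneg_AE) (use nonneg in \<open>eventually_elim, auto simp: indicator_def\<close>)
  ultimately show ?thesis
    by simp
qed

lemma set_integral_exp_weight_le:
  fixes f :: "real \<Rightarrow> real"
  assumes f: "continuous_on UNIV f" and bounds: "\<And>a. 0 \<le> f a" "\<And>a. f a \<le> A"
    and m: "0 < m"
  shows "(LINT a:{0..}|lborel. exp (- m * a) * f a) \<le> (LINT a:{0..L}|lborel. f a) + A * (exp (- m * L) / m)"
proof -
  have [measurable]: "f \<in> borel_measurable borel"
    using f by (rule borel_measurable_continuous_onI)
  have head: "integrable lborel (\<lambda>a. indicator {0..L} a *\<^sub>R f a)"
    by (rule borel_integrable_compact) (auto intro: continuous_on_subset[OF f])
  have tail: "integrable lborel (\<lambda>a. indicator {L'..} a *\<^sub>R exp (- m * a))" for L'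
    using set_integrable_exp_minus_tail[OF m] by (simp add: set_integrable_def)
  have whole: "integrable lborel (\<lambda>a. indicator {0..} a *\<^sub>R (exp (- m * a) * f a))"
  proof (rule Bochner_Integration.integrable_bound[OF integrable_mult_right[OF tail[of 0], of A]])
    show "AE a in lborel. norm (indicator {0..} a *\<^sub>R (exp (- m * a) * f a))
        \<le> norm (A * (indicator {0..} a *\<^sub>R exp (- m * a)))"
      using bounds by (intro AE_I2) (auto simp: indicator_def abs_mult intro: mult_left_mono order_trans[OF _ abs_ge_self])
  qed measurable
  have "0 \<le> A"
    using bounds[of 0] by linarith
  have "(LINT a:{0..}|lborel. exp (- m * a) * f a)
      \<le> integral\<^sup>L lborel (\<lambda>a. indicator {0..L} a *\<^sub>R f a + A * (indicator {L..} a *\<^sub>R exp (- m * a)))"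
    unfolding set_lebesgue_integral_def
  proof (rule integral_mono[OF whole])
    show "integrable lborel (\<lambda>a. indicator {0..L} a *\<^sub>R f a + A * (indicator {L..} a *\<^sub>R exp (- m * a)))"
      using head tail by auto
    fix a :: real
    have "exp (- m * a) * f a \<le> f a" if "0 \<le> a"
      using that m bounds(1)[of a] by (intro mult_left_le_one_le) auto
    moreover have "exp (- m * a) * f a \<le> A * exp (- m * a)"
      using bounds(2)[of a] by (simp add: mult.commute)
    ultimately show "indicator {0..} a *\<^sub>R (exp (- m * a) * f a)
        \<le> indicator {0..L} a *\<^sub>R f a + A * (indicator {L..} a *\<^sub>R exp (- m * a))"
      using bounds[of a] \<open>0 \<le> A\<close> by (auto simp: indicator_def intro: add_increasing2)
  qed
  also have "\<dots> = (LINT a:{0..L}|lborel. f a) + A * (exp (- m * L) / m)"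
    using head tail set_integral_exp_minus_tail[OF m, of L] by (simp add: set_lebesgue_integral_def)
  finally show ?thesis .
qed

lemma emeasure_lborel_reflect:
  assumes [measurable]: "D \<in> sets borel"
  shows "emeasure lborel {a::real. s - a \<in> D} = emeasure lborel D"
proof -
  have "emeasure lborel D = ennreal \<bar>-1\<bar> * (\<integral>\<^sup>+x. indicator D (s + (-1) * x) \<partial>lborel)"
    using nn_integral_real_affine[of "indicator D" "-1" s] by simp
  also have "(\<integral>\<^sup>+x. indicator D (s + (-1) * x) \<partial>lborel) = (\<integral>\<^sup>+x. indicator {a. s - a \<in> D} x \<partial>lborel)"
    by (simp add: indicator_def)
  also have "\<dots> = emeasure lborel {a. s - a \<in> D}"
    by (rule nn_integral_indicator) measurable
  finally show ?thesis
    by simp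
qed

lemma level_set_not_null:
  fixes G :: "real \<Rightarrow> real"
  assumes [measurable]: "G \<in> borel_measurable borel" and nonpos: "\<not> (AE a in lborel. G a \<le> 0)"
  obtains c where "0 < c" "{a. c \<le> G a} \<notin> null_sets lborel"
proof -
  have "\<exists>n. {a. inverse (real (Suc n)) \<le> G a} \<notin> null_sets lborel"
  proof (rule ccontr)
    assume "\<not> ?thesis"
    then have "\<forall>n. AE a in lborel. a \<notin> {a. inverse (real (Suc n)) \<le> G a}"
      using AE_not_in by blast
    then have "AE a in lborel. \<forall>n. a \<notin> {a. inverse (real (Suc n)) \<le> G a}"
      by (subst AE_all_countable)
    then have "AE a in lborel. G a \<le> 0"
    proof eventually_elim
      case (elim a)
      show ?case
      proof (rule ccontr)
        assume "\<not> G a \<le> 0"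
        then obtain n where "inverse (real (Suc n)) < G a"
          using reals_Archimedean[of "G a"] by auto
        then show False
          using elim[rule_format, of n] by auto
      qed
    qed
    with nonpos show False
      by blast
  qed
  then show ?thesis
    using that by (meson inverse_positive_iff_positive of_nat_0_less_iff zero_less_Suc)
qed

lemma lebesgue_density_point:
  assumes E[measurable]: "E \<in> sets borel" and "E \<notin> null_sets lborel" and "0 < e"
  shows "\<exists>p d. 0 < d \<and> (\<forall>h. 0 < h \<and> h < d \<longrightarrow> \<bar>measure lborel (E \<inter> {p..p+h}) / h - 1\<bar> < e)"
proof -
  let ?f = "indicator E :: real \<Rightarrow> real"
  have "?f integrable_on cbox a b" for a b
  proof -
    have "E \<inter> cbox a b \<in> lmeasurable"
      by (rule bounded_set_imp_lmeasurable) (auto intro: bounded_Int)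
    then show ?thesis
      by (simp add: integrable_on_indicator)
  qed
  then obtain N where N: "negligible N"
    "\<And>x e. \<lbrakk>x \<notin> N; 0 < e\<rbrakk> \<Longrightarrow> \<exists>d>0. \<forall>h. 0 < h \<and> h < d \<longrightarrow>
        norm (integral (cbox x (x + h *\<^sub>R One)) ?f /\<^sub>R h ^ DIM(real) - ?f x) < e"
    using integrable_ccontinuous_explicit[of ?f] by blast
  have "\<not> E \<subseteq> N"
  proof
    assume "E \<subseteq> N"
    then have "E \<in> null_sets lebesgue"
      using N(1) negligible_subset negligible_iff_null_sets by blast
    then show False
      using \<open>E \<notin> null_sets lborel\<close> null_sets_completion_iff[of E lborel] by auto
  qed
  then obtain p where p: "p \<in> E" "p \<notin> N"
    by blast
  obtain d where d: "d > 0" "\<And>h. 0 < h \<and> h < d \<Longrightarrow>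
        norm (integral (cbox p (p + h *\<^sub>R One)) ?f /\<^sub>R h ^ DIM(real) - ?f p) < e"
    using N(2)[OF p(2) \<open>0 < e\<close>] by auto
  have average: "integral (cbox p (p + h *\<^sub>R One)) ?f /\<^sub>R h ^ DIM(real) = measure lborel (E \<inter> {p..p+h}) / h"
    for h
  proof -
    have "integral {p..p+h} ?f = measure lebesgue (E \<inter> {p..p+h})"
      by (rule Equivalence_Lebesgue_Henstock_Integration.integral_indicator,
          rule bounded_set_imp_lmeasurable) auto
    then show ?thesis
      by (simp add: cbox_interval divide_inverse mult.commute)
  qed
  have "\<bar>measure lborel (E \<inter> {p..p+h}) / h - 1\<bar> < e" if "0 < h \<and> h < d" for h
    using d(2)[OF that] average[of h] p(1) by simp
  then show ?thesis
    using d(1) by blast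
qed

lemma interval_mostly_in_non_null_set:
  assumes [measurable]: "E \<in> sets borel" and "E \<notin> null_sets lborel"
  obtains p h where "0 < h" "emeasure lborel ({p..p+h} - E) \<le> ennreal (h/4)"
proof -
  obtain p d where "0 < d"
    and density: "\<forall>h. 0 < h \<and> h < d \<longrightarrow> \<bar>measure lborel (E \<inter> {p..p+h}) / h - 1\<bar> < 1/4"
    using lebesgue_density_point[OF assms, of "1/4"] by auto
  define h where "h = d / 2"
  have h: "0 < h" "h < d"
    using \<open>0 < d\<close> by (auto simp: h_def)
  then have "h - h/4 < measure lborel (E \<inter> {p..p+h})"
    using density[rule_format, of h] h by (simp add: abs_if field_simps split: if_splits)
  moreover have "measure lborel ({p..p+h} - E) = h - measure lborel (E \<inter> {p..p+h})"
  proof -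
    have "{p..p+h} - E = {p..p+h} - E \<inter> {p..p+h}"
      by auto
    then show ?thesis
      using h by (simp add: measure_Diff)
  qed
  ultimately have "measure lborel ({p..p+h} - E) \<le> h/4"
    by linarith
  moreover have "emeasure lborel ({p..p+h} - E) = ennreal (measure lborel ({p..p+h} - E))"
  proof (rule emeasure_eq_ennreal_measure)
    have "emeasure lborel ({p..p+h} - E) \<le> emeasure lborel {p..p+h}"
      by (rule emeasure_mono) auto
    then show "emeasure lborel ({p..p+h} - E) \<noteq> top"
      using h by (auto simp: top_unique)
  qed
  ultimately show ?thesis
    using that h by (metis ennreal_leI)
qed

section \<open>Convolution inequalities\<close>

text \<open>The inequality is read in \<open>ennreal\<close>, so that no integrability assumption is needed.\<close>

definition dominates_conv :: "(real \<Rightarrow> real) \<Rightarrow> real set \<Rightarrow> real \<Rightarrow> bool" where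
  "dominates_conv f A C \<longleftrightarrow>
     (\<forall>t. ennreal C * (\<integral>\<^sup>+a. indicator A a * ennreal (f (t - a)) \<partial>lborel) \<le> ennreal (f t))"

lemma dominates_conv_subset:
  assumes "dominates_conv f A C" "B \<subseteq> A"
  shows "dominates_conv f B C"
  unfolding dominates_conv_def
proof
  fix t
  have "ennreal C * (\<integral>\<^sup>+a. indicator B a * ennreal (f (t - a)) \<partial>lborel)
      \<le> ennreal C * (\<integral>\<^sup>+a. indicator A a * ennreal (f (t - a)) \<partial>lborel)"
    using \<open>B \<subseteq> A\<close> by (intro mult_left_mono nn_integral_mono) (auto simp: indicator_def)
  also have "\<dots> \<le> ennreal (f t)"
    using assms(1) unfolding dominates_conv_def by blast
  finally show "ennreal C * (\<integral>\<^sup>+a. indicator B a * ennreal (f (t - a)) \<partial>lborel) \<le> ennreal (f t)" .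
qed

lemma dominates_convI:
  assumes int: "\<And>t. set_integrable lborel A (\<lambda>a. f (t - a))" and nonneg: "\<And>x. 0 \<le> f x"
    and "0 \<le> C" and le: "\<And>t. C * (LINT a:A|lborel. f (t - a)) \<le> f t"
  shows "dominates_conv f A C"
  unfolding dominates_conv_def
proof
  fix t
  have "0 \<le> (LINT a:A|lborel. f (t - a))"
    unfolding set_lebesgue_integral_def by (rule Bochner_Integration.integral_nonneg) (simp add: nonneg)
  then show "ennreal C * (\<integral>\<^sup>+a. indicator A a * ennreal (f (t - a)) \<partial>lborel) \<le> ennreal (f t)"
    using le[of t] \<open>0 \<le> C\<close>
    by (simp add: nn_integral_indicator_eq_set_integral[OF int nonneg] ennreal_mult[symmetric] ennreal_leI)
qed

lemma dominates_conv_intervalD: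
  assumes "dominates_conv f {w..w+L} C" and f: "continuous_on UNIV f" and nonneg: "\<And>x. 0 \<le> f x"
    and "0 \<le> C"
  shows "C * (LINT a:{0..L}|lborel. f (t - w - a)) \<le> f t"
proof -
  have [measurable]: "f \<in> borel_measurable borel"
    using f by (rule borel_measurable_continuous_onI)
  have int: "set_integrable lborel {0..L} (\<lambda>a. f (t - w - a))"
    unfolding set_integrable_def
    by (rule borel_integrable_compact) (auto intro!: continuous_on_compose2[OF f] continuous_intros)
  have "(\<integral>\<^sup>+s. indicator {w..w+L} s * ennreal (f (t - s)) \<partial>lborel)
      = ennreal \<bar>1\<bar> * (\<integral>\<^sup>+a. indicator {w..w+L} (w + 1 * a) * ennreal (f (t - (w + 1 * a))) \<partial>lborel)"
    by (rule nn_integral_real_affine) auto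
  also have "\<dots> = (\<integral>\<^sup>+a. indicator {0..L} a * ennreal (f (t - w - a)) \<partial>lborel)"
    by (auto intro!: nn_integral_cong simp: indicator_def algebra_simps)
  also have "\<dots> = ennreal (LINT a:{0..L}|lborel. f (t - w - a))"
    by (rule nn_integral_indicator_eq_set_integral[OF int nonneg])
  finally have "ennreal (C * (LINT a:{0..L}|lborel. f (t - w - a))) \<le> ennreal (f t)"
    using assms(1) \<open>0 \<le> C\<close> unfolding dominates_conv_def by (metis ennreal_mult')
  then show ?thesis
    using nonneg[of t] by (simp add: ennreal_le_iff)
qed

lemma nn_integral_indicator_le_iterated:
  fixes G :: "real \<Rightarrow> ennreal"
  assumes [measurable]: "A \<in> sets borel" "B \<in> sets borel" "W \<in> sets borel" "G \<in> borel_measurable borel"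
    and cover: "\<And>s. s \<in> W \<Longrightarrow> ennreal c \<le> emeasure lborel (A \<inter> {a. s - a \<in> B})"
  shows "ennreal c * (\<integral>\<^sup>+s. indicator W s * G s \<partial>lborel)
       \<le> (\<integral>\<^sup>+a. indicator A a * (\<integral>\<^sup>+b. indicator B b * G (a + b) \<partial>lborel) \<partial>lborel)"
proof -
  have "ennreal c * (\<integral>\<^sup>+s. indicator W s * G s \<partial>lborel)
      \<le> (\<integral>\<^sup>+s. emeasure lborel (A \<inter> {a. s - a \<in> B}) * G s \<partial>lborel)"
    by (subst nn_integral_cmult[symmetric])
       (auto intro!: nn_integral_mono mult_right_mono cover simp: indicator_def)
  also have "\<dots> = (\<integral>\<^sup>+s. (\<integral>\<^sup>+a. indicator A a * indicator B (s - a) * G s \<partial>lborel) \<partial>lborel)"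
  proof (rule nn_integral_cong)
    fix s
    have "emeasure lborel (A \<inter> {a. s - a \<in> B}) = (\<integral>\<^sup>+a. indicator (A \<inter> {a. s - a \<in> B}) a \<partial>lborel)"
      by (rule nn_integral_indicator[symmetric]) measurable
    also have "\<dots> = (\<integral>\<^sup>+a. indicator A a * indicator B (s - a) \<partial>lborel)"
      by (rule nn_integral_cong) (simp add: indicator_def)
    finally show "emeasure lborel (A \<inter> {a. s - a \<in> B}) * G s
        = (\<integral>\<^sup>+a. indicator A a * indicator B (s - a) * G s \<partial>lborel)"
      by (simp add: nn_integral_multc)
  qed
  also have "\<dots> = (\<integral>\<^sup>+a. (\<integral>\<^sup>+s. indicator A a * indicator B (s - a) * G s \<partial>lborel) \<partial>lborel)"
    by (rule lborel_pair.Fubini') measurable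
  also have "\<dots> = (\<integral>\<^sup>+a. indicator A a * (\<integral>\<^sup>+b. indicator B b * G (a + b) \<partial>lborel) \<partial>lborel)"
  proof (rule nn_integral_cong)
    fix a
    have "(\<integral>\<^sup>+s. indicator A a * indicator B (s - a) * G s \<partial>lborel)
        = ennreal \<bar>1\<bar> * (\<integral>\<^sup>+b. indicator A a * indicator B ((a + 1 * b) - a) * G (a + 1 * b) \<partial>lborel)"
      by (rule nn_integral_real_affine) auto
    also have "\<dots> = indicator A a * (\<integral>\<^sup>+b. indicator B b * G (a + b) \<partial>lborel)"
      by (subst nn_integral_cmult[symmetric]) (simp_all add: mult.assoc)
    finally show "(\<integral>\<^sup>+s. indicator A a * indicator B (s - a) * G s \<partial>lborel)
        = indicator A a * (\<integral>\<^sup>+b. indicator B b * G (a + b) \<partial>lborel)" .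
  qed
  finally show ?thesis .
qed

text \<open>The hypothesis \<open>cover\<close> says \<open>\<one>\<^sub>W \<le> (\<one>\<^sub>A * \<one>\<^sub>B) / c\<close>, so the two inequalities chain.\<close>

lemma dominates_conv_compose:
  assumes [measurable]: "f \<in> borel_measurable borel" "A \<in> sets borel" "B \<in> sets borel" "W \<in> sets borel"
    and "0 \<le> C1" "0 \<le> C2" "0 \<le> c"
    and A: "dominates_conv f A C1" and B: "dominates_conv f B C2"
    and cover: "\<And>s. s \<in> W \<Longrightarrow> ennreal c \<le> emeasure lborel (A \<inter> {a. s - a \<in> B})"
  shows "dominates_conv f W (C1 * C2 * c)"
  unfolding dominates_conv_def
proof
  fix t
  let ?F = "\<lambda>s. ennreal (f (t - s))"
  have "ennreal C2 * (\<integral>\<^sup>+a. indicator A a * (\<integral>\<^sup>+b. indicator B b * ?F (a + b) \<partial>lborel) \<partial>lborel)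
      = (\<integral>\<^sup>+a. indicator A a * (ennreal C2 * (\<integral>\<^sup>+b. indicator B b * ?F (a + b) \<partial>lborel)) \<partial>lborel)"
    by (subst nn_integral_cmult[symmetric]) (measurable, simp add: mult.left_commute)
  also have "\<dots> \<le> (\<integral>\<^sup>+a. indicator A a * ?F a \<partial>lborel)"
  proof (intro nn_integral_mono mult_left_mono)
    fix a
    show "ennreal C2 * (\<integral>\<^sup>+b. indicator B b * ?F (a + b) \<partial>lborel) \<le> ?F a"
      using B[unfolded dominates_conv_def, rule_format, of "t - a"] by (simp add: diff_diff_eq)
  qed simp
  finally have inner: "ennreal C2 * (\<integral>\<^sup>+a. indicator A a * (\<integral>\<^sup>+b. indicator B b * ?F (a + b) \<partial>lborel) \<partial>lborel)
      \<le> (\<integral>\<^sup>+a. indicator A a * ?F a \<partial>lborel)" .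
  have cover_int: "ennreal c * (\<integral>\<^sup>+s. indicator W s * ?F s \<partial>lborel)
      \<le> (\<integral>\<^sup>+a. indicator A a * (\<integral>\<^sup>+b. indicator B b * ?F (a + b) \<partial>lborel) \<partial>lborel)"
    by (rule nn_integral_indicator_le_iterated[where G="?F", OF _ _ _ _ cover]; measurable)
  have "ennreal (C1 * C2 * c) * (\<integral>\<^sup>+s. indicator W s * ?F s \<partial>lborel)
      = ennreal C1 * (ennreal C2 * (ennreal c * (\<integral>\<^sup>+s. indicator W s * ?F s \<partial>lborel)))"
    using \<open>0 \<le> C1\<close> \<open>0 \<le> C2\<close> \<open>0 \<le> c\<close> by (simp add: ennreal_mult mult.assoc)
  also have "\<dots> \<le> ennreal C1 * (\<integral>\<^sup>+a. indicator A a * ?F a \<partial>lborel)"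
    using order_trans[OF mult_left_mono[OF cover_int] inner]
    by (intro mult_left_mono) auto
  also have "\<dots> \<le> ennreal (f t)"
    using A unfolding dominates_conv_def by blast
  finally show "ennreal (C1 * C2 * c) * (\<integral>\<^sup>+s. indicator W s * ?F s \<partial>lborel) \<le> ennreal (f t)" .
qed

lemma emeasure_interval_inter_reflect_interval:
  fixes w j l r :: real
  assumes r: "0 < r" "r \<le> l" and s: "s \<in> {w + j + r/4 .. w + j + l + 3*r/4}"
  shows "ennreal (r/4) \<le> emeasure lborel ({w..w+l} \<inter> {a. s - a \<in> {j..j+r}})"
proof -
  obtain x where x: "{x - r/4 .. x} \<subseteq> {w..w+l} \<inter> {a. s - a \<in> {j..j+r}}"
  proof (cases "s - j \<le> w + l")
    case True
    then show ?thesis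
      using r s by (intro that[of "s - j"]) auto
  next
    case False
    then show ?thesis
      using r s by (intro that[of "w + l"]) auto
  qed
  then have "emeasure lborel {x - r/4 .. x} \<le> emeasure lborel ({w..w+l} \<inter> {a. s - a \<in> {j..j+r}})"
    by (rule emeasure_mono) measurable
  then show ?thesis
    using r by simp
qed

text \<open>A quantitative form of Steinhaus' theorem.\<close>

lemma emeasure_inter_reflect_ge:
  fixes p h :: real
  assumes h: "0 < h" and F[measurable]: "F \<in> sets borel" and "F \<subseteq> {p..p+h}"
    and dense: "emeasure lborel ({p..p+h} - F) \<le> ennreal (h/4)"
    and s: "s \<in> {2*p + 3*h/4 .. 2*p + 5*h/4}"
  shows "ennreal (h/4) \<le> emeasure lborel (F \<inter> {a. s - a \<in> F})"
proof -
  define \<delta> where "\<delta> = s - 2*p - h"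
  have \<delta>: "\<bar>\<delta>\<bar> \<le> h/4"
    using s by (auto simp: \<delta>_def abs_if)
  define D where "D = {p..p+h} - F"
  have [measurable]: "D \<in> sets borel"
    unfolding D_def by measurable
  define Q where "Q = {p + max 0 \<delta> .. p + h + min 0 \<delta>}"
  have "Q \<subseteq> (F \<inter> {a. s - a \<in> F} \<union> D) \<union> {a. s - a \<in> D}"
    using \<delta> h unfolding Q_def D_def \<delta>_def by auto
  then have "emeasure lborel Q \<le> emeasure lborel ((F \<inter> {a. s - a \<in> F} \<union> D) \<union> {a. s - a \<in> D})"
    by (rule emeasure_mono) measurable
  also have "\<dots> \<le> emeasure lborel (F \<inter> {a. s - a \<in> F}) + emeasure lborel D + emeasure lborel {a. s - a \<in> D}"
    by (intro order_trans[OF emeasure_subadditive] add_right_mono emeasure_subadditive) measurable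
  also have "\<dots> \<le> emeasure lborel (F \<inter> {a. s - a \<in> F}) + ennreal (h/4) + ennreal (h/4)"
    using dense emeasure_lborel_reflect[of D s] unfolding D_def by (intro add_mono) auto
  finally have "ennreal (h - \<bar>\<delta>\<bar>) \<le> emeasure lborel (F \<inter> {a. s - a \<in> F}) + ennreal (h/2)"
    using \<delta> h unfolding Q_def
    by (simp add: max_def min_def add.assoc ennreal_plus[symmetric] del: ennreal_plus split: if_splits)
  then show ?thesis
    using \<delta> h by (cases "emeasure lborel (F \<inter> {a. s - a \<in> F})")
      (auto simp: ennreal_plus[symmetric] ennreal_le_iff simp del: ennreal_plus intro!: ennreal_leI)
qed

lemma dominates_conv_interval_of_dense:
  assumes [measurable]: "f \<in> borel_measurable borel"
    and "0 < C" "0 < h" and [measurable]: "F \<in> sets borel"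
    and "F \<subseteq> {p..p+h}" "emeasure lborel ({p..p+h} - F) \<le> ennreal (h/4)" "dominates_conv f F C"
  obtains j r K where "0 < r" "0 < K" "dominates_conv f {j..j+r} K"
proof -
  have "dominates_conv f {2*p + 3*h/4 .. 2*p + 3*h/4 + h/2} (C * C * (h/4))"
    using assms by (intro dominates_conv_compose[where A=F and B=F]) (auto intro!: emeasure_inter_reflect_ge)
  then show ?thesis
    using assms by (intro that[of "h/2" "C * C * (h/4)" "2*p + 3*h/4"]) auto
qed

lemma dominates_conv_lengthen:
  assumes [measurable]: "f \<in> borel_measurable borel"
    and r: "0 < r" and "0 < K" and J: "dominates_conv f {j..j+r} K"
  shows "\<exists>w C. 0 < C \<and> dominates_conv f {w..w + (r + real n * (r/2))} C"
proof (induction n)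
  case 0
  then show ?case
    using \<open>0 < K\<close> J by auto
next
  case (Suc n)
  then obtain w C where "0 < C" and W: "dominates_conv f {w..w + (r + real n * (r/2))} C"
    by blast
  define l where "l = r + real n * (r/2)"
  have "r \<le> l"
    using r by (simp add: l_def)
  have "dominates_conv f {w + j + r/4 .. w + j + l + 3*r/4} (C * K * (r/4))"
  proof (rule dominates_conv_compose[where A="{w..w+l}" and B="{j..j+r}"])
    show "ennreal (r/4) \<le> emeasure lborel ({w..w+l} \<inter> {a. s - a \<in> {j..j+r}})"
      if "s \<in> {w + j + r/4 .. w + j + l + 3*r/4}" for s
      by (rule emeasure_interval_inter_reflect_interval[OF r \<open>r \<le> l\<close> that])
  qed (use \<open>0 < C\<close> \<open>0 < K\<close> r W J in \<open>auto simp: l_def\<close>)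
  moreover have "w + j + l + 3*r/4 = (w + j + r/4) + (r + real (Suc n) * (r/2))"
    by (simp add: l_def field_simps)
  moreover have "0 < C * K * (r/4)"
    using \<open>0 < C\<close> \<open>0 < K\<close> r by simp
  ultimately show ?case
    by metis
qed

lemma dominates_conv_any_length:
  assumes "f \<in> borel_measurable borel" "0 < r" "0 < K" "dominates_conv f {j..j+r} K"
  obtains w C where "0 < C" "dominates_conv f {w..w+L} C"
proof -
  obtain n where "L / (r/2) < real n"
    using reals_Archimedean2 by blast
  then have "L \<le> r + real n * (r/2)"
    using \<open>0 < r\<close> by (simp add: field_simps)
  moreover obtain w C where "0 < C" and W: "dominates_conv f {w..w + (r + real n * (r/2))} C"
    using dominates_conv_lengthen[OF assms] by blast
  ultimately have "dominates_conv f {w..w+L} C"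
    by (intro dominates_conv_subset[OF W]) auto
  then show ?thesis
    using that \<open>0 < C\<close> by blast
qed

section \<open>Complete orbits of the age-structured Ricker model\<close>

lemma ricker_le_exp_minus_one: "ricker x \<le> exp (-1)"
proof -
  have "x \<le> exp (x - 1)"
    using exp_ge_add_one_self[of "x - 1"] by simp
  then have "x * exp (- x) \<le> exp (x - 1) * exp (- x)"
    by (rule mult_right_mono) simp
  also have "\<dots> = exp (-1)"
    by (simp add: exp_add[symmetric])
  finally show ?thesis
    unfolding ricker_def .
qed

lemma ricker_le_self: "0 \<le> x \<Longrightarrow> ricker x \<le> x"
  unfolding ricker_def by (simp add: mult_left_le)

lemma ricker_ge: "0 \<le> x \<Longrightarrow> x \<le> M \<Longrightarrow> x * exp (- M) \<le> ricker x"
  unfolding ricker_def by (simp add: mult_left_mono)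

lemma ricker_nonneg: "0 \<le> x \<Longrightarrow> 0 \<le> ricker x"
  unfolding ricker_def by simp

locale ricker_orbit =
  fixes \<mu> \<alpha> :: real and \<beta> :: "real \<Rightarrow> real" and u :: "real \<Rightarrow> real \<Rightarrow> real"
  assumes mu_pos: "0 < \<mu>" and alpha_pos: "0 < \<alpha>"
    and beta_meas: "set_borel_measurable lborel {0..} \<beta>"
    and beta_Linf: "\<exists>M. AE a in lborel. 0 \<le> a \<longrightarrow> 0 \<le> \<beta> a \<and> \<beta> a \<le> M"
    and beta_norm: "(LINT a:{0..}|lborel. \<beta> a * exp (- \<mu> * a)) = 1"
    and orbit: "complete_orbit \<mu> \<alpha> \<beta> u"
begin

definition beta_bound :: real where
  "beta_bound = (SOME M. AE a in lborel. 0 \<le> a \<longrightarrow> 0 \<le> \<beta> a \<and> \<beta> a \<le> M)"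

lemma beta_bounded: "AE a in lborel. 0 \<le> a \<longrightarrow> 0 \<le> \<beta> a \<and> \<beta> a \<le> beta_bound"
  unfolding beta_bound_def using beta_Linf by (rule someI_ex)

lemma beta_measurable[measurable]: "(\<lambda>a. indicator {0..} a * \<beta> a) \<in> borel_measurable borel"
  using beta_meas unfolding set_borel_measurable_def by simp

lemma u_integrable: "set_integrable lborel {0..} (u t)"
  using orbit unfolding complete_orbit_def L1_plus_def by auto

lemma u_nonneg: "AE a in lborel. 0 \<le> a \<longrightarrow> 0 \<le> u t a"
  using orbit unfolding complete_orbit_def L1_plus_def by auto

lemma u_measurable[measurable]: "(\<lambda>a. indicator {0..} a * u t a) \<in> borel_measurable borel"
  using u_integrable[of t] unfolding set_integrable_def by (auto dest: borel_measurable_integrable)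

lemma set_integrable_beta_mult:
  assumes h: "set_integrable lborel S h" and [measurable]: "S \<in> sets borel" and "S \<subseteq> {0..}"
  shows "set_integrable lborel S (\<lambda>a. \<beta> a * h a)"
proof (rule set_integrable_bound[OF set_integrable_mult_right[OF h, of "\<bar>beta_bound\<bar>"]])
  have "(\<lambda>a. indicator S a * h a) \<in> borel_measurable borel"
    using h unfolding set_integrable_def by (auto dest: borel_measurable_integrable)
  moreover have "(\<lambda>a. indicator S a *\<^sub>R (\<beta> a * h a)) = (\<lambda>a. (indicator {0..} a * \<beta> a) * (indicator S a * h a))"
    using \<open>S \<subseteq> {0..}\<close> by (auto simp: indicator_def fun_eq_iff)
  ultimately show "set_borel_measurable lborel S (\<lambda>a. \<beta> a * h a)"
    unfolding set_borel_measurable_def by simp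
  show "AE a in lborel. a \<in> S \<longrightarrow> norm (\<beta> a * h a) \<le> norm (\<bar>beta_bound\<bar> * h a)"
    using beta_bounded
  proof eventually_elim
    case (elim a)
    show ?case
    proof
      assume "a \<in> S"
      then have "\<bar>\<beta> a\<bar> \<le> \<bar>beta_bound\<bar>"
        using elim \<open>S \<subseteq> {0..}\<close> by auto
      then show "norm (\<beta> a * h a) \<le> norm (\<bar>beta_bound\<bar> * h a)"
        by (simp add: abs_mult mult_right_mono)
    qed
  qed
qed

lemma set_integrable_u_shift:
  assumes "0 \<le> \<tau>"
  shows "set_integrable lborel {\<tau>..} (\<lambda>a. u t (a - \<tau>))"
proof -
  have "integrable lborel (\<lambda>x. indicator {0..} (- \<tau> + 1 * x) * u t (- \<tau> + 1 * x))"
    using u_integrable[of t] lborel_integrable_real_affine_iff[of 1 "\<lambda>x. indicator {0..} x * u t x" "- \<tau>"]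
    by (simp add: set_integrable_def)
  moreover have "indicator {0..} (- \<tau> + 1 * x) = (indicator {\<tau>..} x :: real)" for x
    by (simp add: indicator_def)
  ultimately show ?thesis
    by (simp add: set_integrable_def)
qed

lemma set_integrable_beta_continuous:
  assumes "continuous_on {0..\<tau>} h" "S \<in> sets borel" "S \<subseteq> {0..\<tau>}"
  shows "set_integrable lborel S (\<lambda>a. \<beta> a * h a)"
proof (rule set_integrable_beta_mult)
  have "set_integrable lborel {0..\<tau>} h"
    unfolding set_integrable_def by (rule borel_integrable_compact[OF compact_Icc assms(1)])
  then show "set_integrable lborel S h"
    by (rule set_integrable_subset) (use assms in auto)
qed (use assms in auto)

definition weighted_pop :: "real \<Rightarrow> real" where
  "weighted_pop t = (LINT a:{0..}|lborel. \<beta> a * u t a)"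

definition birth :: "real \<Rightarrow> real" where
  "birth t = \<alpha> * ricker (weighted_pop t)"

lemma set_integrable_beta_u: "set_integrable lborel {0..} (\<lambda>a. \<beta> a * u t a)"
  by (rule set_integrable_beta_mult[OF u_integrable]) auto

definition transport_rep :: "real \<Rightarrow> real \<Rightarrow> (real \<Rightarrow> real) \<Rightarrow> bool" where
  "transport_rep t s c \<longleftrightarrow> continuous_on {0..s} c \<and>
     (AE a in lborel. 0 \<le> a \<longrightarrow>
        u (t + s) a = (if s \<le> a then exp (- \<mu> * s) * u t (a - s) else exp (- \<mu> * a) * c (s - a)))"

definition boundary_input :: "real \<Rightarrow> (real \<Rightarrow> real) \<Rightarrow> real \<Rightarrow> real" where
  "boundary_input t c \<tau> =
     (LINT a:{\<tau>..}|lborel. \<beta> a * exp (- \<mu> * \<tau>) * u t (a - \<tau>))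
     + (LINT a:{0..\<tau>}|lborel. \<beta> a * exp (- \<mu> * a) * c (\<tau> - a))"

lemma semiflow_stepE:
  assumes "0 \<le> s"
  obtains c where "transport_rep t s c" "\<forall>\<tau>\<in>{0..s}. c \<tau> = \<alpha> * ricker (boundary_input t c \<tau>)"
  using orbit assms unfolding complete_orbit_def semiflow_step_def transport_rep_def boundary_input_def
  by blast

lemma set_integrable_transported_term:
  assumes "0 \<le> \<tau>"
  shows "set_integrable lborel {\<tau>..} (\<lambda>a. \<beta> a * exp (- \<mu> * \<tau>) * u t (a - \<tau>))"
proof -
  have "set_integrable lborel {\<tau>..} (\<lambda>a. \<beta> a * (exp (- \<mu> * \<tau>) * u t (a - \<tau>)))"
    by (rule set_integrable_beta_mult[OF set_integrable_mult_right[OF set_integrable_u_shift[OF assms]]])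
       (use assms in auto)
  then show ?thesis
    by (simp only: mult.assoc)
qed

lemma set_integrable_boundary_term:
  assumes "continuous_on {0..\<tau>} c" "S \<in> sets borel" "S \<subseteq> {0..\<tau>}"
  shows "set_integrable lborel S (\<lambda>a. \<beta> a * exp (- \<mu> * a) * c (\<tau> - a))"
proof -
  have "continuous_on {0..\<tau>} (\<lambda>a. c (\<tau> - a))"
    using assms(1) by (rule continuous_on_compose2) (auto intro!: continuous_intros)
  then have "continuous_on {0..\<tau>} (\<lambda>a. exp (- \<mu> * a) * c (\<tau> - a))"
    by (intro continuous_intros)
  then show ?thesis
    using set_integrable_beta_continuous[OF _ assms(2,3)] by (simp only: mult.assoc)
qed

lemma weighted_pop_transport:
  assumes "0 \<le> \<tau>" and rep: "transport_rep t \<tau> c"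
  shows "weighted_pop (t + \<tau>) = boundary_input t c \<tau>"
proof -
  define old where "old a = \<beta> a * exp (- \<mu> * \<tau>) * u t (a - \<tau>)" for a
  define new where "new a = \<beta> a * exp (- \<mu> * a) * c (\<tau> - a)" for a
  have old: "set_integrable lborel {\<tau>..} old"
    unfolding old_def by (rule set_integrable_transported_term[OF \<open>0 \<le> \<tau>\<close>])
  have new_open: "set_integrable lborel {0..<\<tau>} new" and new_closed: "set_integrable lborel {0..\<tau>} new"
    unfolding new_def using conjunct1[OF rep[unfolded transport_rep_def]]
    by (rule set_integrable_boundary_term; auto)+
  let ?split = "\<lambda>a. indicator {\<tau>..} a *\<^sub>R old a + indicator {0..<\<tau>} a *\<^sub>R new a"
  have int_split: "integrable lborel ?split"
    using old new_open unfolding set_integrable_def by (rule Bochner_Integration.integrable_add)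
  have "(\<lambda>a. indicator {0..} a *\<^sub>R (\<beta> a * u (t + \<tau>) a)) \<in> borel_measurable lborel"
    using set_integrable_beta_u unfolding set_integrable_def by (rule borel_measurable_integrable)
  moreover have "AE a in lborel. indicator {0..} a *\<^sub>R (\<beta> a * u (t + \<tau>) a) = ?split a"
    using conjunct2[OF rep[unfolded transport_rep_def]]
    by eventually_elim (use \<open>0 \<le> \<tau>\<close> in \<open>auto simp: indicator_def old_def new_def\<close>)
  ultimately have "weighted_pop (t + \<tau>) = integral\<^sup>L lborel ?split"
    unfolding weighted_pop_def set_lebesgue_integral_def
    by (rule integral_cong_AE[OF _ borel_measurable_integrable[OF int_split]])
  also have "\<dots> = (LINT a:{\<tau>..}|lborel. old a) + (LINT a:{0..<\<tau>}|lborel. new a)"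
    using old new_open unfolding set_integrable_def set_lebesgue_integral_def
    by (rule Bochner_Integration.integral_add)
  also have "(LINT a:{0..<\<tau>}|lborel. new a) = (LINT a:{0..\<tau>}|lborel. new a)"
  proof (rule set_integral_cong_set)
    show "set_borel_measurable lborel {0..<\<tau>} new" "set_borel_measurable lborel {0..\<tau>} new"
      using new_open new_closed unfolding set_integrable_def set_borel_measurable_def
      by (auto dest: borel_measurable_integrable)
    show "AE a in lborel. a \<in> {0..\<tau>} \<longleftrightarrow> a \<in> {0..<\<tau>}"
      using AE_lborel_singleton[of \<tau>] by eventually_elim auto
  qed
  finally show ?thesis
    unfolding boundary_input_def old_def new_def .
qed

text \<open>Ages in \<open>(s - \<tau>, s)\<close> at time \<open>t + s\<close> were born during the step of length \<open>\<tau>\<close> from \<open>t\<close>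
  and have since been transported by the step of length \<open>s - \<tau>\<close> from \<open>t + \<tau>\<close>.\<close>

lemma transport_rep_young_ages:
  assumes "\<tau> \<le> s" and rep: "transport_rep t \<tau> c"
  shows "AE a in lborel. s - \<tau> < a \<and> a < s \<longrightarrow> u (t + s) a = exp (- \<mu> * a) * c (s - a)"
proof -
  define d where "d = s - \<tau>"
  have "0 \<le> d" "s = \<tau> + d"
    using assms by (auto simp: d_def)
  obtain c' where rep': "transport_rep (t + \<tau>) d c'"
    and "\<forall>\<sigma>\<in>{0..d}. c' \<sigma> = \<alpha> * ricker (boundary_input (t + \<tau>) c' \<sigma>)"
    by (rule semiflow_stepE[OF \<open>0 \<le> d\<close>])
  have "t + \<tau> + d = t + s"
    using \<open>s = \<tau> + d\<close> by simp
  note later = conjunct2[OF rep'[unfolded transport_rep_def], unfolded this]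
  note shifted = AE_lborel_affine[OF one_neq_zero conjunct2[OF rep[unfolded transport_rep_def]], of "- d"]
  from later shifted show ?thesis
  proof eventually_elim
    case (elim a)
    show ?case
    proof
      assume a: "s - \<tau> < a \<and> a < s"
      have ages: "d < a" "0 \<le> a" "- d + 1 * a = a - d" "\<not> \<tau> \<le> a - d" "\<tau> - (a - d) = s - a"
        using a \<open>s = \<tau> + d\<close> \<open>0 \<le> d\<close> by linarith+
      have "u (t + s) a = exp (- \<mu> * d) * u (t + \<tau>) (a - d)"
        using elim(1) ages by simp
      also have "u (t + \<tau>) (a - d) = exp (- \<mu> * (a - d)) * c (s - a)"
        using elim(2) ages by simp
      also have "exp (- \<mu> * d) * (exp (- \<mu> * (a - d)) * c (s - a))
          = (exp (- \<mu> * d) * exp (- \<mu> * (a - d))) * c (s - a)"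
        by (simp only: mult.assoc)
      also have "exp (- \<mu> * d) * exp (- \<mu> * (a - d)) = exp (- \<mu> * a)"
        by (simp add: exp_add[symmetric] algebra_simps)
      finally show "u (t + s) a = exp (- \<mu> * a) * c (s - a)" .
    qed
  qed
qed

lemma transport_rep_boundary_AE_eq:
  assumes "\<tau> \<le> s" and rep: "transport_rep t s c" and rep': "transport_rep t \<tau> c'"
  shows "AE a in lborel. s - \<tau> < a \<and> a < s \<longrightarrow> c (s - a) = c' (s - a)"
  using transport_rep_young_ages[OF assms(1) rep'] conjunct2[OF rep[unfolded transport_rep_def]]
proof eventually_elim
  case (elim a)
  show ?case
  proof
    assume a: "s - \<tau> < a \<and> a < s"
    then have "exp (- \<mu> * a) * c (s - a) = exp (- \<mu> * a) * c' (s - a)"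
      using elim \<open>\<tau> \<le> s\<close> by simp
    then show "c (s - a) = c' (s - a)"
      by simp
  qed
qed

lemma transport_rep_unique:
  assumes "0 < \<tau>" "\<tau> \<le> s" "transport_rep t s c" "transport_rep t \<tau> c'"
  shows "\<forall>y\<in>{0..\<tau>}. c y = c' y"
proof (rule continuous_on_eq_if_AE_eq)
  have "AE y in lborel. s - \<tau> < s + (-1) * y \<and> s + (-1) * y < s \<longrightarrow>
      c (s - (s + (-1) * y)) = c' (s - (s + (-1) * y))"
    using AE_lborel_affine[OF _ transport_rep_boundary_AE_eq[OF assms(2-4)], of "-1" s] by simp
  then show "AE y in lborel. 0 < y \<and> y < \<tau> \<longrightarrow> c y = c' y"
    by eventually_elim auto
  have "continuous_on {0..s} c"
    using assms(3) unfolding transport_rep_def by blast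
  then show "continuous_on {0..\<tau>} c"
    by (rule continuous_on_subset) (use \<open>\<tau> \<le> s\<close> in auto)
  show "continuous_on {0..\<tau>} c'"
    using assms(4) unfolding transport_rep_def by blast
qed (use assms in auto)

lemma boundary_eq_birth:
  assumes "0 \<le> s" and rep: "transport_rep t s c"
    and fixed: "\<forall>\<tau>\<in>{0..s}. c \<tau> = \<alpha> * ricker (boundary_input t c \<tau>)" and y: "y \<in> {0..s}"
  shows "c y = birth (t + y)"
proof (cases "y = 0")
  case True
  have "boundary_input t c 0 = weighted_pop t"
    by (simp add: boundary_input_def weighted_pop_def set_integral_singleton_real)
  moreover have "c 0 = \<alpha> * ricker (boundary_input t c 0)"
    by (rule fixed[rule_format]) (use \<open>0 \<le> s\<close> in simp)
  ultimately show ?thesis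
    using True unfolding birth_def by simp
next
  case False
  then have "0 < y" "0 \<le> y" "y \<le> s"
    using y by auto
  obtain c' where rep': "transport_rep t y c'"
    and fixed': "\<forall>\<tau>\<in>{0..y}. c' \<tau> = \<alpha> * ricker (boundary_input t c' \<tau>)"
    by (rule semiflow_stepE[OF \<open>0 \<le> y\<close>])
  have "c' y = \<alpha> * ricker (boundary_input t c' y)"
    by (rule fixed'[rule_format]) (use \<open>0 < y\<close> in simp)
  also have "\<dots> = birth (t + y)"
    unfolding birth_def weighted_pop_transport[OF \<open>0 \<le> y\<close> rep'] ..
  finally have "c' y = birth (t + y)" .
  moreover have "c y = c' y"
    using transport_rep_unique[OF \<open>0 < y\<close> \<open>y \<le> s\<close> rep rep'] \<open>0 < y\<close> by auto
  ultimately show ?thesis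
    by simp
qed

lemma isCont_birth: "isCont birth z"
proof -
  obtain c where rep: "transport_rep (z - 1) 2 c"
    and fixed: "\<forall>\<tau>\<in>{0..2}. c \<tau> = \<alpha> * ricker (boundary_input (z - 1) c \<tau>)"
    by (rule semiflow_stepE[of 2 "z - 1"]) simp
  have c_eq: "\<forall>y\<in>{0..2}. c y = birth (z - 1 + y)"
    using boundary_eq_birth[OF _ rep fixed] by simp
  have "continuous_on {z - 1..z + 1} (\<lambda>w. c (w - (z - 1)))"
    using conjunct1[OF rep[unfolded transport_rep_def]]
    by (rule continuous_on_compose2) (auto intro!: continuous_intros)
  then have "continuous_on {z - 1..z + 1} birth"
    by (rule continuous_on_eq) (use c_eq in auto)
  then show ?thesis
    by (rule continuous_on_interior) (simp add: interior_atLeastAtMost_real)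
qed

lemma continuous_on_birth: "continuous_on A birth"
  using isCont_birth by (simp add: continuous_at_imp_continuous_on)

lemma birth_measurable[measurable]: "birth \<in> borel_measurable borel"
  by (rule borel_measurable_continuous_onI[OF continuous_on_birth])

lemma set_integrable_birth_reflect: "set_integrable lborel {p..q} (\<lambda>a. birth (t - a))"
  unfolding set_integrable_def
  by (rule borel_integrable_compact) (auto intro!: continuous_on_compose2[OF continuous_on_birth] continuous_intros)

lemma u_eq_birth_below:
  assumes "0 \<le> s"
  shows "AE a in lborel. 0 \<le> a \<and> a < s \<longrightarrow> u t a = exp (- \<mu> * a) * birth (t - a)"
proof -
  obtain c where rep: "transport_rep (t - s) s c"
    and fixed: "\<forall>\<tau>\<in>{0..s}. c \<tau> = \<alpha> * ricker (boundary_input (t - s) c \<tau>)"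
    by (rule semiflow_stepE[OF assms])
  have c_eq: "c (s - a) = birth (t - a)" if "0 \<le> a" "a < s" for a
    using boundary_eq_birth[OF assms rep fixed, of "s - a"] that by simp
  from conjunct2[OF rep[unfolded transport_rep_def]] show ?thesis
    by eventually_elim (auto simp: c_eq)
qed

lemma u_eq_birth: "AE a in lborel. 0 \<le> a \<longrightarrow> u t a = exp (- \<mu> * a) * birth (t - a)"
proof -
  have "AE a in lborel. \<forall>n. 0 \<le> a \<and> a < real n \<longrightarrow> u t a = exp (- \<mu> * a) * birth (t - a)"
    using u_eq_birth_below by (subst AE_all_countable) auto
  then show ?thesis
  proof eventually_elim
    case (elim a)
    obtain n where "a < real n"
      using reals_Archimedean2 by blast
    then show ?case
      using elim by blast
  qed
qed

lemma renewal_integrand_AE: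
  "AE a in lborel. indicator {0..} a *\<^sub>R (\<beta> a * u t a)
     = indicator {0..} a *\<^sub>R (\<beta> a * exp (- \<mu> * a) * birth (t - a))"
  using u_eq_birth[of t] by eventually_elim (auto simp: indicator_def)

lemma renewal_integrand_measurable:
  "(\<lambda>a. indicator {0..} a *\<^sub>R (\<beta> a * exp (- \<mu> * a) * birth (t - a))) \<in> borel_measurable lborel"
proof -
  have "(\<lambda>a. indicator {0..} a *\<^sub>R (\<beta> a * exp (- \<mu> * a) * birth (t - a)))
      = (\<lambda>a. (indicator {0..} a * \<beta> a) * (exp (- \<mu> * a) * birth (t - a)))"
    by (auto simp: indicator_def fun_eq_iff)
  then show ?thesis
    by simp
qed

lemma set_integrable_renewal_integrand:
  "set_integrable lborel {0..} (\<lambda>a. \<beta> a * exp (- \<mu> * a) * birth (t - a))"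
proof -
  have "integrable lborel (\<lambda>a. indicator {0..} a *\<^sub>R (\<beta> a * u t a))"
    using set_integrable_beta_u unfolding set_integrable_def .
  then show ?thesis
    unfolding set_integrable_def
    using integrable_cong_AE[OF borel_measurable_integrable renewal_integrand_measurable renewal_integrand_AE]
    by blast
qed

lemma weighted_pop_eq_renewal:
  "weighted_pop t = (LINT a:{0..}|lborel. \<beta> a * exp (- \<mu> * a) * birth (t - a))"
proof -
  have "(\<lambda>a. indicator {0..} a *\<^sub>R (\<beta> a * u t a)) \<in> borel_measurable lborel"
    using set_integrable_beta_u unfolding set_integrable_def by (rule borel_measurable_integrable)
  then show ?thesis
    unfolding weighted_pop_def set_lebesgue_integral_def
    by (rule integral_cong_AE[OF _ renewal_integrand_measurable renewal_integrand_AE])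
qed

lemma birth_renewal:
  "birth t = \<alpha> * ricker (LINT a:{0..}|lborel. \<beta> a * exp (- \<mu> * a) * birth (t - a))"
  by (simp only: birth_def[of t] weighted_pop_eq_renewal[of t])

lemma mass_eq_birth:
  "(LINT a:{0..}|lborel. u t a) = (LINT a:{0..}|lborel. exp (- \<mu> * a) * birth (t - a))"
  unfolding set_lebesgue_integral_def
proof (rule integral_cong_AE)
  show "AE a in lborel. indicator {0..} a *\<^sub>R u t a = indicator {0..} a *\<^sub>R (exp (- \<mu> * a) * birth (t - a))"
    using u_eq_birth[of t] by eventually_elim (auto simp: indicator_def)
qed (use u_measurable[of t] in simp_all)

lemma weighted_pop_nonneg: "0 \<le> weighted_pop t"
proof -
  have "AE a in lborel. 0 \<le> indicator {0..} a *\<^sub>R (\<beta> a * u t a)"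
    using beta_bounded u_nonneg[of t] by eventually_elim (auto simp: indicator_def)
  then show ?thesis
    unfolding weighted_pop_def set_lebesgue_integral_def by (rule integral_nonneg_AE)
qed

lemma birth_nonneg: "0 \<le> birth t"
  unfolding birth_def using ricker_nonneg[OF weighted_pop_nonneg] alpha_pos by simp

lemma birth_le: "birth t \<le> \<alpha> * exp (-1)"
  unfolding birth_def using ricker_le_exp_minus_one alpha_pos by (simp add: mult_left_mono)

lemma birth_le_weighted_pop: "birth t \<le> \<alpha> * weighted_pop t"
  unfolding birth_def using ricker_le_self[OF weighted_pop_nonneg] alpha_pos by (simp add: mult_left_mono)

lemma set_integrable_beta_exp: "set_integrable lborel {0..} (\<lambda>a. \<beta> a * exp (- \<mu> * a))"
  by (rule set_integrable_beta_mult[OF set_integrable_exp_minus_tail[OF mu_pos]]) auto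

lemma weighted_pop_le: "weighted_pop t \<le> \<alpha> * exp (-1)"
proof -
  have "weighted_pop t \<le> (LINT a:{0..}|lborel. \<beta> a * exp (- \<mu> * a) * (\<alpha> * exp (-1)))"
    unfolding weighted_pop_eq_renewal
  proof (rule set_integral_mono_AE[OF set_integrable_renewal_integrand])
    show "set_integrable lborel {0..} (\<lambda>a. \<beta> a * exp (- \<mu> * a) * (\<alpha> * exp (-1)))"
      using set_integrable_beta_exp by (rule set_integrable_mult_left)
    show "AE a\<in>{0..} in lborel. \<beta> a * exp (- \<mu> * a) * birth (t - a) \<le> \<beta> a * exp (- \<mu> * a) * (\<alpha> * exp (-1))"
      using beta_bounded by eventually_elim (auto intro!: mult_left_mono birth_le)
  qed
  also have "\<dots> = \<alpha> * exp (-1)"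
    using beta_norm by simp
  finally show ?thesis .
qed

lemma birth_ge_weighted_pop: "\<alpha> * exp (- (\<alpha> * exp (-1))) * weighted_pop t \<le> birth t"
  using mult_left_mono[OF ricker_ge[OF weighted_pop_nonneg weighted_pop_le], of \<alpha>] alpha_pos
  unfolding birth_def by (simp add: mult_ac)

lemma renewal_kernel_not_AE_nonpos: "\<not> (AE a in lborel. indicator {0..} a * \<beta> a * exp (- \<mu> * a) \<le> 0)"
proof
  assume "AE a in lborel. indicator {0..} a * \<beta> a * exp (- \<mu> * a) \<le> 0"
  then have "AE a in lborel. indicator {0..} a *\<^sub>R (\<beta> a * exp (- \<mu> * a)) = 0"
    using beta_bounded by eventually_elim (auto simp: indicator_def mult_le_0_iff split: if_splits)
  then have "(LINT a:{0..}|lborel. \<beta> a * exp (- \<mu> * a)) = 0"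
    unfolding set_lebesgue_integral_def by (rule integral_eq_zero_AE)
  then show False
    using beta_norm by simp
qed

lemma weighted_pop_ge_birth_integral:
  assumes [measurable]: "F \<in> sets borel" and F: "F \<subseteq> {0..}" "F \<subseteq> {p..q}"
    and lower: "\<And>a. a \<in> F \<Longrightarrow> c \<le> \<beta> a * exp (- \<mu> * a)"
  shows "c * (LINT a:F|lborel. birth (t - a)) \<le> weighted_pop t"
proof -
  have "set_integrable lborel F (\<lambda>a. c * birth (t - a))"
    by (intro set_integrable_mult_right set_integrable_subset[OF set_integrable_birth_reflect _ F(2)]) auto
  moreover have "set_integrable lborel F (\<lambda>a. \<beta> a * exp (- \<mu> * a) * birth (t - a))"
    by (rule set_integrable_subset[OF set_integrable_renewal_integrand _ F(1)]) simp
  ultimately have "(LINT a:F|lborel. c * birth (t - a)) \<le> (LINT a:F|lborel. \<beta> a * exp (- \<mu> * a) * birth (t - a))"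
    by (rule set_integral_mono) (use lower birth_nonneg in \<open>auto intro: mult_right_mono\<close>)
  also have "\<dots> \<le> (LINT a:{0..}|lborel. \<beta> a * exp (- \<mu> * a) * birth (t - a))"
    using set_integrable_renewal_integrand
  proof (rule set_integral_le_of_subset_nonneg[OF _ _ F(1)])
    show "AE a in lborel. a \<in> {0..} \<longrightarrow> 0 \<le> \<beta> a * exp (- \<mu> * a) * birth (t - a)"
      using beta_bounded by eventually_elim (auto simp: birth_nonneg)
  qed
  finally show ?thesis
    by (simp add: weighted_pop_eq_renewal)
qed

lemma birth_dominates_conv_dense:
  obtains C p h F where "0 < C" "0 < h" "F \<in> sets borel" "F \<subseteq> {p..p+h}"
    "emeasure lborel ({p..p+h} - F) \<le> ennreal (h/4)" "dominates_conv birth F C"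
proof -
  let ?G = "\<lambda>a. indicator {0..} a * \<beta> a * exp (- \<mu> * a)"
  have "?G \<in> borel_measurable borel"
    by measurable
  then obtain c where "0 < c" and not_null: "{a. c \<le> ?G a} \<notin> null_sets lborel"
    using level_set_not_null renewal_kernel_not_AE_nonpos by blast
  define E where "E = {a. c \<le> ?G a}"
  have E_meas[measurable]: "E \<in> sets borel"
    unfolding E_def by measurable
  obtain p h where "0 < h" and dense: "emeasure lborel ({p..p+h} - E) \<le> ennreal (h/4)"
    using interval_mostly_in_non_null_set[OF E_meas not_null[folded E_def]] by blast
  define F where "F = E \<inter> {p..p+h}"
  have "E \<subseteq> {0..}"
    using \<open>0 < c\<close> by (auto simp: E_def indicator_def split: if_splits)
  then have F: "F \<subseteq> {0..}" "F \<subseteq> {p..p+h}" and lower: "\<And>a. a \<in> F \<Longrightarrow> c \<le> \<beta> a * exp (- \<mu> * a)"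
    by (auto simp: F_def E_def)
  let ?\<kappa> = "\<alpha> * exp (- (\<alpha> * exp (-1)))"
  have "dominates_conv birth F (?\<kappa> * c)"
  proof (rule dominates_convI)
    show "set_integrable lborel F (\<lambda>a. birth (t - a))" for t
      by (rule set_integrable_subset[OF set_integrable_birth_reflect]) (auto simp: F_def)
    show "?\<kappa> * c * (LINT a:F|lborel. birth (t - a)) \<le> birth t" for t
    proof -
      have "?\<kappa> * (c * (LINT a:F|lborel. birth (t - a))) \<le> ?\<kappa> * weighted_pop t"
        using weighted_pop_ge_birth_integral[OF _ F lower, where t=t] alpha_pos
        by (intro mult_left_mono) (auto simp: F_def)
      then show ?thesis
        using birth_ge_weighted_pop[of t] by (simp only: mult.assoc)
    qed
  qed (use \<open>0 < c\<close> alpha_pos birth_nonneg in auto)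
  moreover have "{p..p+h} - F = {p..p+h} - E"
    by (auto simp: F_def)
  ultimately show ?thesis
    using that[of "?\<kappa> * c" h F p] \<open>0 < c\<close> \<open>0 < h\<close> alpha_pos dense F by (simp add: F_def)
qed

lemma birth_window_mass:
  assumes "0 < \<gamma>" and mass: "\<And>t. \<gamma> \<le> (LINT a:{0..}|lborel. u t a)"
  obtains L where "0 < L" "\<And>T. \<gamma> / 2 \<le> (LINT a:{0..L}|lborel. birth (T - a))"
proof -
  define A where "A = \<alpha> * exp (-1)"
  define q where "q = \<gamma> * \<mu> / (2 * A)"
  have "0 < A" "0 < q"
    using alpha_pos mu_pos \<open>0 < \<gamma>\<close> by (simp_all add: A_def q_def)
  define L where "L = (\<bar>ln q\<bar> + 1) / \<mu>"
  have "0 < L"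
    using mu_pos by (simp add: L_def add_nonneg_pos)
  have "exp (- \<mu> * L) = exp (- (\<bar>ln q\<bar> + 1))"
    using mu_pos by (simp add: L_def)
  also have "\<dots> \<le> exp (ln q)"
    by simp
  also have "\<dots> = q"
    using \<open>0 < q\<close> by simp
  finally have "A * (exp (- \<mu> * L) / \<mu>) \<le> A * (q / \<mu>)"
    using \<open>0 < A\<close> mu_pos by (intro mult_left_mono divide_right_mono) auto
  also have "\<dots> = \<gamma> / 2"
    using \<open>0 < A\<close> mu_pos by (simp add: q_def field_simps)
  finally have tail: "A * (exp (- \<mu> * L) / \<mu>) \<le> \<gamma> / 2" .
  have "\<gamma> / 2 \<le> (LINT a:{0..L}|lborel. birth (T - a))" for T
  proof -
    have "\<gamma> \<le> (LINT a:{0..}|lborel. exp (- \<mu> * a) * birth (T - a))"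
      using mass[of T] by (simp add: mass_eq_birth)
    also have "\<dots> \<le> (LINT a:{0..L}|lborel. birth (T - a)) + A * (exp (- \<mu> * L) / \<mu>)"
      by (rule set_integral_exp_weight_le[OF _ birth_nonneg birth_le[unfolded A_def[symmetric]] mu_pos])
         (auto intro!: continuous_on_compose2[OF continuous_on_birth] continuous_intros)
    finally show ?thesis
      using tail by linarith
  qed
  then show ?thesis
    using that \<open>0 < L\<close> by blast
qed

lemma weighted_pop_lower_bound:
  assumes "0 < \<gamma>" and mass: "\<And>t. \<gamma> \<le> (LINT a:{0..}|lborel. u t a)"
  obtains \<delta> where "0 < \<delta>" "\<And>t. \<delta> \<le> weighted_pop t"
proof -
  obtain L where "0 < L" and window: "\<And>T. \<gamma> / 2 \<le> (LINT a:{0..L}|lborel. birth (T - a))"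
    using birth_window_mass[OF assms] by blast
  obtain C0 p h F where "0 < C0" "0 < h" "F \<in> sets borel" "F \<subseteq> {p..p+h}"
    "emeasure lborel ({p..p+h} - F) \<le> ennreal (h/4)" "dominates_conv birth F C0"
    by (rule birth_dominates_conv_dense)
  then obtain j r K where "0 < r" "0 < K" "dominates_conv birth {j..j+r} K"
    by (rule dominates_conv_interval_of_dense[OF birth_measurable])
  then obtain w C where "0 < C" and long: "dominates_conv birth {w..w+L} C"
    by (rule dominates_conv_any_length[OF birth_measurable])
  have "C * (\<gamma> / 2) / \<alpha> \<le> weighted_pop t" for t
  proof -
    have "C * (\<gamma> / 2) \<le> C * (LINT a:{0..L}|lborel. birth (t - w - a))"
      using window[of "t - w"] \<open>0 < C\<close> by (intro mult_left_mono) auto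
    also have "\<dots> \<le> birth t"
      by (rule dominates_conv_intervalD[OF long continuous_on_birth birth_nonneg]) (use \<open>0 < C\<close> in simp)
    also have "\<dots> \<le> \<alpha> * weighted_pop t"
      by (rule birth_le_weighted_pop)
    finally show ?thesis
      using alpha_pos by (simp add: field_simps)
  qed
  moreover have "0 < C * (\<gamma> / 2) / \<alpha>"
    using \<open>0 < C\<close> \<open>0 < \<gamma>\<close> alpha_pos by simp
  ultimately show ?thesis
    using that by blast
qed

end

theorem theorem5p4:
  fixes \<mu> \<alpha> :: real and \<beta> :: "real \<Rightarrow> real" and u :: "real \<Rightarrow> real \<Rightarrow> real"
  assumes mu_pos: "0 < \<mu>" and alpha_pos: "0 < \<alpha>"
    and beta_meas: "set_borel_measurable lborel {0..} \<beta>"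
    and beta_Linf: "\<exists>M. AE a in lborel. 0 \<le> a \<longrightarrow> 0 \<le> \<beta> a \<and> \<beta> a \<le> M"
    and beta_norm: "(LINT a:{0..}|lborel. \<beta> a * exp (- \<mu> * a)) = 1"
    and orbit: "complete_orbit \<mu> \<alpha> \<beta> u"
  shows "(\<exists>b :: real \<Rightarrow> real.
            (\<forall>t. AE a in lborel. 0 \<le> a \<longrightarrow> u t a = exp (- \<mu> * a) * b (t - a)) \<and>
            (\<forall>t. set_integrable lborel {0..} (\<lambda>a. \<beta> a * exp (- \<mu> * a) * b (t - a)) \<and>
                 b t = \<alpha> * ricker (LINT a:{0..}|lborel. \<beta> a * exp (- \<mu> * a) * b (t - a))))
       \<and> (\<forall>\<gamma>m \<gamma>p :: real. 0 < \<gamma>m \<and> \<gamma>m < \<gamma>p \<and>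
            (\<forall>t. \<gamma>m \<le> (LINT a:{a. 0 \<le> a \<and> ereal a \<le> a_star \<mu> \<beta>}|lborel. u t a) \<and>
                 (LINT a:{a. 0 \<le> a \<and> ereal a \<le> a_star \<mu> \<beta>}|lborel. u t a) \<le> \<gamma>p)
          \<longrightarrow> (\<exists>\<delta>m \<delta>p :: real. 0 < \<delta>m \<and> \<delta>m \<le> \<delta>p \<and>
                 (\<forall>t. \<delta>m \<le> (LINT a:{0..}|lborel. \<beta> a * u t a) \<and>
                      (LINT a:{0..}|lborel. \<beta> a * u t a) \<le> \<delta>p)))"
proof -
  interpret ricker_orbit \<mu> \<alpha> \<beta> u
    by unfold_locales (fact assms)+
  have renewal: "\<exists>b :: real \<Rightarrow> real.
            (\<forall>t. AE a in lborel. 0 \<le> a \<longrightarrow> u t a = exp (- \<mu> * a) * b (t - a)) \<and>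
            (\<forall>t. set_integrable lborel {0..} (\<lambda>a. \<beta> a * exp (- \<mu> * a) * b (t - a)) \<and>
                 b t = \<alpha> * ricker (LINT a:{0..}|lborel. \<beta> a * exp (- \<mu> * a) * b (t - a)))"
    using u_eq_birth set_integrable_renewal_integrand birth_renewal by blast
  have "\<exists>\<delta>m \<delta>p :: real. 0 < \<delta>m \<and> \<delta>m \<le> \<delta>p \<and>
          (\<forall>t. \<delta>m \<le> (LINT a:{0..}|lborel. \<beta> a * u t a) \<and> (LINT a:{0..}|lborel. \<beta> a * u t a) \<le> \<delta>p)"
    if "0 < \<gamma>m" and mass_a_star: "\<And>t. \<gamma>m \<le> (LINT a:{a. 0 \<le> a \<and> ereal a \<le> a_star \<mu> \<beta>}|lborel. u t a)"
    for \<gamma>m :: real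
  proof -
    have "\<gamma>m \<le> (LINT a:{0..}|lborel. u t a)" for t
      using mass_a_star[of t] u_nonneg[of t]
      by (auto intro: order_trans intro!: set_integral_le_of_subset_nonneg[OF u_integrable])
    then obtain \<delta> where "0 < \<delta>" "\<And>t. \<delta> \<le> weighted_pop t"
      using weighted_pop_lower_bound \<open>0 < \<gamma>m\<close> by blast
    then show ?thesis
      using weighted_pop_le unfolding weighted_pop_def
      by (intro exI[of _ \<delta>] exI[of _ "max \<delta> (\<alpha> * exp (-1))"]) (auto simp: le_max_iff_disj)
  qed
  with renewal show ?thesis
    by blast
qed

end
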